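(* Let $p$ be an odd prime and $k\ge0$. Let $A,B,C,A',B',C'\in\mathbb{Z}_p$ satisfy: - $p\nmid A^2-C^2$ and $p\nmid A'^2-C'^2$; - $p^k$ divides each of $B,C,B',C'$; - $p^{k+1}\nmid C$ and $p^{k+1}\nmid C'$. If $f_{(A,B,C)}\equiv f_{(A',B',C')}\pmod{p^{2k+4}}$, then $A\equiv A'\pmod{p^{2k+3}}$. If only $f_{(A,B,C)}\equiv f_{(A',B',C')}\pmod{p^{2k+3}}$ is assumed, then $A\equiv A'\pmod{p^{2k+2}}$.
   Context: For $A,B,C\in\mathbb{Z}_p$, define $f_{(A,B,C)}(x)=(x^2+pA)^2-p^2(Bx+C)^2\in\mathbb{Z}_p[x]$. Congruences of polynomials are coefficientwise. *)

theory Defs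
  imports "HOL-Computational_Algebra.Polynomial"
begin

text \<open>p-adic integers Z_p modelled as coherent sequences of residues:
  x n is the residue of x modulo p^n, taken in {0..<p^n}.\<close>

definition zp :: "int \<Rightarrow> (nat \<Rightarrow> int) set" where
  "zp p = {x. \<forall>n. 0 \<le> x n \<and> x n < p ^ n \<and> x (Suc n) mod p ^ n = x n}"

definition zp_add :: "int \<Rightarrow> (nat \<Rightarrow> int) \<Rightarrow> (nat \<Rightarrow> int) \<Rightarrow> (nat \<Rightarrow> int)" where
  "zp_add p x y = (\<lambda>n. (x n + y n) mod p ^ n)"

definition zp_mul :: "int \<Rightarrow> (nat \<Rightarrow> int) \<Rightarrow> (nat \<Rightarrow> int) \<Rightarrow> (nat \<Rightarrow> int)" where
  "zp_mul p x y = (\<lambda>n. (x n * y n) mod p ^ n)"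

definition zp_neg :: "int \<Rightarrow> (nat \<Rightarrow> int) \<Rightarrow> (nat \<Rightarrow> int)" where
  "zp_neg p x = (\<lambda>n. (- x n) mod p ^ n)"

definition zp_cong :: "int \<Rightarrow> nat \<Rightarrow> (nat \<Rightarrow> int) \<Rightarrow> (nat \<Rightarrow> int) \<Rightarrow> bool" where
  "zp_cong p m x y \<longleftrightarrow> x m = y m"

definition zp_pow_dvd :: "int \<Rightarrow> nat \<Rightarrow> (nat \<Rightarrow> int) \<Rightarrow> bool" where
  "zp_pow_dvd p k x \<longleftrightarrow> x k = 0"

definition f_int :: "int \<Rightarrow> int \<Rightarrow> int \<Rightarrow> int \<Rightarrow> int poly" where
  "f_int p a b c = [:p * a, 0, 1:] ^ 2 - smult (p ^ 2) ([:c, b:] ^ 2)"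

text \<open>Since reduction Z_p -> Z/p^n is a ring homomorphism, its residue mod p^n is
  the i-th coefficient of f_int evaluated at the residues of A,B,C mod p^n.\<close>
definition f_coeff :: "int \<Rightarrow> (nat \<Rightarrow> int) \<Rightarrow> (nat \<Rightarrow> int) \<Rightarrow> (nat \<Rightarrow> int) \<Rightarrow> nat \<Rightarrow> (nat \<Rightarrow> int)" where
  "f_coeff p A B C i = (\<lambda>n. coeff (f_int p (A n) (B n) (C n)) i mod p ^ n)"

definition f_cong :: "int \<Rightarrow> nat \<Rightarrow> (nat \<Rightarrow> int) \<Rightarrow> (nat \<Rightarrow> int) \<Rightarrow> (nat \<Rightarrow> int)
    \<Rightarrow> (nat \<Rightarrow> int) \<Rightarrow> (nat \<Rightarrow> int) \<Rightarrow> (nat \<Rightarrow> int) \<Rightarrow> bool" where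
  "f_cong p m A B C A' B' C' \<longleftrightarrow> (\<forall>i. zp_cong p m (f_coeff p A B C i) (f_coeff p A' B' C' i))"

end

theory Submission
  imports Defs "HOL-Computational_Algebra.Primes"
begin

text \<open>Write \<open>B = p\<^sup>k\<beta>\<close>, \<open>C = p\<^sup>k\<gamma>\<close>, and likewise for the primed data, so that
  \<open>\<gamma>'\<close> is a unit. The coefficients of \<open>x\<^sup>2\<close>, \<open>x\<close> and \<open>1\<close> in \<open>f\<close> are \<open>2pA - p\<^sup>2B\<^sup>2\<close>,
  \<open>-2p\<^sup>2BC\<close> and \<open>p\<^sup>2(A\<^sup>2 - C\<^sup>2)\<close>. Comparing them modulo \<open>p\<^bsup>2k+2+e\<^esup>\<close> gives
  \<open>2(A - A') \<equiv> p\<^bsup>2k+1\<^esup>(\<beta>\<^sup>2 - \<beta>'\<^sup>2)\<close> mod \<open>p\<^bsup>2k+1+e\<^esup>\<close>, \<open>\<beta>\<gamma> \<equiv> \<beta>'\<gamma>'\<close> mod \<open>p\<^sup>e\<close> and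
  \<open>A\<^sup>2 - A'\<^sup>2 \<equiv> p\<^bsup>2k\<^esup>(\<gamma>\<^sup>2 - \<gamma>'\<^sup>2)\<close> mod \<open>p\<^bsup>2k+e\<^esup>\<close>. Multiplying the first by \<open>A + A'\<close>
  and using the second to trade \<open>\<gamma>\<^sup>2 - \<gamma>'\<^sup>2\<close> for \<open>\<beta>\<^sup>2 - \<beta>'\<^sup>2\<close> shows that \<open>\<beta>\<^sup>2 - \<beta>'\<^sup>2\<close>
  times a unit vanishes mod \<open>p\<^sup>e\<close>, so the correction term \<open>p\<^bsup>2k+1\<^esup>(\<beta>\<^sup>2 - \<beta>'\<^sup>2)\<close> is
  itself \<open>0\<close> mod \<open>p\<^bsup>2k+1+e\<^esup>\<close>. The theorem is the cases \<open>e = 2\<close> and \<open>e = 1\<close>.\<close>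

lemma prime_power_dvd_mult_cancel:
  fixes p x y :: int
  assumes "prime p" "\<not> p dvd x"
  shows "p ^ n dvd x * y \<longleftrightarrow> p ^ n dvd y"
  using assms by (simp add: prime_imp_coprime coprime_dvd_mult_right_iff)

lemma odd_prime_not_dvd_2:
  fixes p :: int
  assumes "prime p" "odd p"
  shows "\<not> p dvd 2"
  using assms primes_dvd_imp_eq[of p 2] by auto

lemma prime_power_dvd_cancel_power:
  fixes p x :: int
  assumes "p \<noteq> 0"
  shows "p ^ (n + m) dvd p ^ n * x \<longleftrightarrow> p ^ m dvd x"
  using assms by (simp add: power_add)

lemma f_int_eq:
  "f_int p a b c = [:p\<^sup>2 * a\<^sup>2 - p\<^sup>2 * c\<^sup>2, - 2 * p\<^sup>2 * b * c, 2 * p * a - p\<^sup>2 * b\<^sup>2, 0, 1:]"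
  by (simp add: f_int_def power2_eq_square algebra_simps)

lemma f_int_coeff_012:
  "coeff (f_int p a b c) 0 = p\<^sup>2 * (a\<^sup>2 - c\<^sup>2)"
  "coeff (f_int p a b c) 1 = - 2 * p\<^sup>2 * (b * c)"
  "coeff (f_int p a b c) 2 = p * (2 * a) - p\<^sup>2 * b\<^sup>2"
  by (simp_all add: f_int_eq numeral_2_eq_2 algebra_simps)

lemma cong_from_scaled_coeff_congs:
  fixes p a a' \<beta> \<beta>' \<gamma> \<gamma>' :: int
  assumes p: "prime p" "odd p" and unit: "\<not> p dvd \<gamma>'"
    and lin: "p ^ e dvd \<beta> * \<gamma> - \<beta>' * \<gamma>'"
    and quad: "p ^ (n + 1 + e) dvd 2 * (a - a') - p ^ (n + 1) * (\<beta>\<^sup>2 - \<beta>'\<^sup>2)"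
    and const: "p ^ (n + e) dvd (a\<^sup>2 - a'\<^sup>2) - p ^ n * (\<gamma>\<^sup>2 - \<gamma>'\<^sup>2)"
  shows "p ^ (n + 1 + e) dvd a - a'"
proof -
  define E where "E = \<beta>\<^sup>2 - \<beta>'\<^sup>2"
  define G where "G = \<gamma>\<^sup>2 - \<gamma>'\<^sup>2"
  define D where "D = 2 * (a - a') - p ^ (n + 1) * E"
  have p0: "p \<noteq> 0" using p by auto
  have "p ^ (n + e) dvd D"
    using quad dvd_trans[OF le_imp_power_dvd[of "n + e" "n + 1 + e"]] unfolding D_def E_def by simp
  hence "p ^ (n + e) dvd D * (a + a')"
    by (rule dvd_mult2)
  moreover have "p ^ (n + e) dvd 2 * ((a\<^sup>2 - a'\<^sup>2) - p ^ n * G)"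
    using const unfolding G_def by (rule dvd_mult)
  ultimately have "p ^ (n + e) dvd 2 * ((a\<^sup>2 - a'\<^sup>2) - p ^ n * G) - D * (a + a')"
    by (rule dvd_diff[rotated])
  also have "\<dots> = p ^ n * (p * E * (a + a') - 2 * G)"
    unfolding D_def by (simp add: power2_eq_square algebra_simps)
  finally have G_E: "p ^ e dvd p * E * (a + a') - 2 * G"
    using prime_power_dvd_cancel_power[OF p0] by blast
  have "\<gamma>'\<^sup>2 * E + \<beta>\<^sup>2 * G = (\<beta> * \<gamma> - \<beta>' * \<gamma>') * (2 * \<beta> * \<gamma> - (\<beta> * \<gamma> - \<beta>' * \<gamma>'))"
    unfolding E_def G_def by (simp add: power2_eq_square algebra_simps)
  hence "p ^ e dvd \<gamma>'\<^sup>2 * E + \<beta>\<^sup>2 * G"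
    using lin by simp
  hence "p ^ e dvd 2 * (\<gamma>'\<^sup>2 * E + \<beta>\<^sup>2 * G) + \<beta>\<^sup>2 * (p * E * (a + a') - 2 * G)"
    using G_E by (rule dvd_add[OF dvd_mult dvd_mult])
  also have "\<dots> = (2 * \<gamma>'\<^sup>2 + p * \<beta>\<^sup>2 * (a + a')) * E"
    by (simp add: algebra_simps)
  finally have "p ^ e dvd (2 * \<gamma>'\<^sup>2 + p * \<beta>\<^sup>2 * (a + a')) * E" .
  moreover have "\<not> p dvd 2 * \<gamma>'\<^sup>2 + p * \<beta>\<^sup>2 * (a + a')"
  proof
    assume "p dvd 2 * \<gamma>'\<^sup>2 + p * \<beta>\<^sup>2 * (a + a')"
    hence "p dvd 2 * \<gamma>'\<^sup>2"
      by (simp add: dvd_add_left_iff)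
    thus False
      using p unit odd_prime_not_dvd_2 prime_dvd_mult_iff prime_dvd_power by blast
  qed
  ultimately have "p ^ e dvd E"
    using prime_power_dvd_mult_cancel[OF p(1)] by blast
  hence "p ^ (n + 1 + e) dvd p ^ (n + 1) * E"
    using prime_power_dvd_cancel_power[OF p0] by blast
  with quad have "p ^ (n + 1 + e) dvd 2 * (a - a')"
    unfolding E_def by (metis diff_add_cancel dvd_add)
  thus ?thesis
    using prime_power_dvd_mult_cancel[OF p(1) odd_prime_not_dvd_2[OF p]] by blast
qed

lemma f_int_coeff_cong_imp_cong:
  fixes p a b c a' b' c' :: int
  assumes p: "prime p" "odd p"
    and "p ^ k dvd b" "p ^ k dvd c" "p ^ k dvd b'" "p ^ k dvd c'" "\<not> p ^ (k + 1) dvd c'"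
    and coeffs: "\<And>i. p ^ (2 * k + 2 + e) dvd coeff (f_int p a b c) i - coeff (f_int p a' b' c') i"
  shows "p ^ (2 * k + 1 + e) dvd a - a'"
proof -
  have p0: "p \<noteq> 0" using p by auto
  obtain \<beta> \<beta>' \<gamma> \<gamma>' where
    b: "b = p ^ k * \<beta>" and b': "b' = p ^ k * \<beta>'" and c: "c = p ^ k * \<gamma>" and c': "c' = p ^ k * \<gamma>'"
    using assms(3-6) unfolding dvd_def by blast
  have pkk: "p ^ (2 * k) = p ^ k * p ^ k"
    by (simp add: mult_2 power_add)
  have "\<not> p dvd \<gamma>'"
    using assms(7) p0 by (simp add: c')
  moreover have "coeff (f_int p a b c) 1 - coeff (f_int p a' b' c') 1
      = p ^ (2 * k + 2) * (2 * (\<beta>' * \<gamma>' - \<beta> * \<gamma>))"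
    unfolding f_int_coeff_012 b b' c c' power_add pkk by algebra
  hence "p ^ (2 * k + 2 + e) dvd p ^ (2 * k + 2) * (2 * (\<beta>' * \<gamma>' - \<beta> * \<gamma>))"
    using coeffs[of 1] by simp
  hence "p ^ e dvd \<beta>' * \<gamma>' - \<beta> * \<gamma>"
    using prime_power_dvd_cancel_power[OF p0]
      prime_power_dvd_mult_cancel[OF p(1) odd_prime_not_dvd_2[OF p]] by blast
  hence "p ^ e dvd \<beta> * \<gamma> - \<beta>' * \<gamma>'"
    by (simp add: dvd_diff_commute)
  moreover have "coeff (f_int p a b c) 2 - coeff (f_int p a' b' c') 2
      = p * (2 * (a - a') - p ^ (2 * k + 1) * (\<beta>\<^sup>2 - \<beta>'\<^sup>2))"
    unfolding f_int_coeff_012 b b' power_add pkk by algebra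
  hence "p ^ (1 + (2 * k + 1 + e)) dvd p * (2 * (a - a') - p ^ (2 * k + 1) * (\<beta>\<^sup>2 - \<beta>'\<^sup>2))"
    using coeffs[of 2] by (simp add: ac_simps)
  hence "p ^ (2 * k + 1 + e) dvd 2 * (a - a') - p ^ (2 * k + 1) * (\<beta>\<^sup>2 - \<beta>'\<^sup>2)"
    using prime_power_dvd_cancel_power[OF p0, of 1, unfolded power_one_right] by blast
  moreover have "coeff (f_int p a b c) 0 - coeff (f_int p a' b' c') 0
      = p\<^sup>2 * ((a\<^sup>2 - a'\<^sup>2) - p ^ (2 * k) * (\<gamma>\<^sup>2 - \<gamma>'\<^sup>2))"
    unfolding f_int_coeff_012 c c' pkk by algebra
  hence "p ^ (2 + (2 * k + e)) dvd p\<^sup>2 * ((a\<^sup>2 - a'\<^sup>2) - p ^ (2 * k) * (\<gamma>\<^sup>2 - \<gamma>'\<^sup>2))"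
    using coeffs[of 0] by (simp add: ac_simps)
  hence "p ^ (2 * k + e) dvd (a\<^sup>2 - a'\<^sup>2) - p ^ (2 * k) * (\<gamma>\<^sup>2 - \<gamma>'\<^sup>2)"
    using prime_power_dvd_cancel_power[OF p0, of 2] by blast
  ultimately show ?thesis
    using cong_from_scaled_coeff_congs[OF p] by blast
qed

lemma zp_residue_mod:
  assumes "x \<in> zp p" "j \<le> n"
  shows "x n mod p ^ j = x j"
  using assms(2)
proof (induction n rule: dec_induct)
  case base
  have "0 \<le> x j" "x j < p ^ j" using assms(1) unfolding zp_def by blast+
  thus ?case by (rule mod_pos_pos_trivial)
next
  case (step n)
  have "p ^ j dvd p ^ n" using step.hyps(1) by (rule le_imp_power_dvd)
  hence "x (Suc n) mod p ^ j = x (Suc n) mod p ^ n mod p ^ j" by (simp add: mod_mod_cancel)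
  also have "x (Suc n) mod p ^ n = x n" using assms(1) unfolding zp_def by blast
  finally show ?case using step.IH by simp
qed

lemma zp_pow_dvd_iff:
  assumes "x \<in> zp p" "k \<le> m"
  shows "zp_pow_dvd p k x \<longleftrightarrow> p ^ k dvd x m"
  using zp_residue_mod[OF assms] by (simp add: zp_pow_dvd_def dvd_eq_mod_eq_0)

lemma zp_cong_iff:
  assumes "x \<in> zp p" "y \<in> zp p" "j \<le> m"
  shows "zp_cong p j x y \<longleftrightarrow> p ^ j dvd x m - y m"
  using zp_residue_mod[OF assms(1,3)] zp_residue_mod[OF assms(2,3)]
    mod_eq_dvd_iff[of "x m" "p ^ j" "y m"]
  by (simp add: zp_cong_def)

lemma f_cong_iff:
  "f_cong p m A B C A' B' C' \<longleftrightarrow>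
    (\<forall>i. p ^ m dvd coeff (f_int p (A m) (B m) (C m)) i - coeff (f_int p (A' m) (B' m) (C' m)) i)"
  by (simp add: f_cong_def zp_cong_def f_coeff_def mod_eq_dvd_iff)

lemma f_cong_imp_zp_cong:
  assumes p: "prime p" "odd p"
    and zp: "A \<in> zp p" "B \<in> zp p" "C \<in> zp p" "A' \<in> zp p" "B' \<in> zp p" "C' \<in> zp p"
    and dvd: "zp_pow_dvd p k B" "zp_pow_dvd p k C" "zp_pow_dvd p k B'" "zp_pow_dvd p k C'"
    and not_dvd: "\<not> zp_pow_dvd p (k + 1) C'"
    and f_cong: "f_cong p (2 * k + 2 + e) A B C A' B' C'"
  shows "zp_cong p (2 * k + 1 + e) A A'"
proof -
  let ?m = "2 * k + 2 + e"
  have dvd_m: "p ^ k dvd X ?m" if "X \<in> zp p" "zp_pow_dvd p k X" for X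
    using that zp_pow_dvd_iff[OF that(1), of k ?m] by simp
  have "\<not> p ^ (k + 1) dvd C' ?m"
    using not_dvd zp_pow_dvd_iff[OF zp(6), of "k + 1" ?m] by simp
  moreover have "\<And>i. p ^ ?m dvd coeff (f_int p (A ?m) (B ?m) (C ?m)) i
      - coeff (f_int p (A' ?m) (B' ?m) (C' ?m)) i"
    using f_cong f_cong_iff by blast
  ultimately have "p ^ (2 * k + 1 + e) dvd A ?m - A' ?m"
    using f_int_coeff_cong_imp_cong[OF p dvd_m[OF zp(2) dvd(1)] dvd_m[OF zp(3) dvd(2)]
        dvd_m[OF zp(5) dvd(3)] dvd_m[OF zp(6) dvd(4)]] by blast
  thus ?thesis
    using zp_cong_iff[OF zp(1,4), of "2 * k + 1 + e" ?m] by simp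
qed

theorem claim4:
  fixes p :: int and k :: nat and A B C A' B' C' :: "nat \<Rightarrow> int"
  assumes "prime p" and "odd p"
    and "A \<in> zp p" "B \<in> zp p" "C \<in> zp p" "A' \<in> zp p" "B' \<in> zp p" "C' \<in> zp p"
    and "\<not> zp_pow_dvd p 1 (zp_add p (zp_mul p A A) (zp_neg p (zp_mul p C C)))"
    and "\<not> zp_pow_dvd p 1 (zp_add p (zp_mul p A' A') (zp_neg p (zp_mul p C' C')))"
    and "zp_pow_dvd p k B" "zp_pow_dvd p k C" "zp_pow_dvd p k B'" "zp_pow_dvd p k C'"
    and "\<not> zp_pow_dvd p (k + 1) C" "\<not> zp_pow_dvd p (k + 1) C'"
  shows "(f_cong p (2 * k + 4) A B C A' B' C' \<longrightarrow> zp_cong p (2 * k + 3) A A')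
       \<and> (f_cong p (2 * k + 3) A B C A' B' C' \<longrightarrow> zp_cong p (2 * k + 2) A A')"
  using f_cong_imp_zp_cong[OF assms(1-8,11-14,16), of 2]
    f_cong_imp_zp_cong[OF assms(1-8,11-14,16), of 1]
  by (simp add: numeral_eq_Suc)

end
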